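(* Let $(A,B)$ be a random vector with $\mathbb P\{A\in(0,1]\}=1$, $\mathbb P\{B>x\}\sim ax^ce^{-bx}$ as $x\to\infty$ for some $a,b>0$ and $c<-1$, $\mathbb E e^{bB}\mathbf 1_{\{A=1\}}<1$, and suppose there is a nonnegative measurable $f$ with $\mathbb P\{Ay+B>x\}\sim f(y)\mathbb P\{B>x\}$ as $x\to\infty$ for each $y\in\mathbb R$. Then, on a possibly enlarged probability space, there exists a nonnegative random variable $Z$ independent of $(A,B)$ such that $\mathbb P\{Z>x\}\sim c_Z\mathbb P\{B>x\}$ as $x\to\infty$ for some constant $c_Z>0$, and $AZ+B\le_{\rm st}Z$.
   Context: For random variables $U,V$, $U\le_{\rm st}V$ means $\mathbb P\{U>x\}\le\mathbb P\{V>x\}$ for all $x\in\mathbb R$. *)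

theory Defs
  imports "HOL-Probability.Probability" "HOL-Library.Landau_Symbols"
begin

end

theory Submission
  imports Defs "HOL-Real_Asymp.Real_Asymp"
begin

text \<open>
  Write \<open>G x = P{B > x}\<close>. For a small level \<open>\<epsilon>\<close>, let \<open>Z\<close> be independent of \<open>(A, B)\<close> with
  \<open>P{Z > x} = min 1 (G x / \<epsilon>)\<close>, so that \<open>P{Z > x} \<sim> G x / \<epsilon>\<close> and
  \<open>P{A Z + B > x} = E min 1 (G ((x - B) / A) / \<epsilon>)\<close>. The required inequality is trivial where
  \<open>G x \<ge> \<epsilon>\<close>; for large \<open>x\<close> split according to \<open>B\<close>. On \<open>B \<le> x/2\<close> the exponential tail gives
  \<open>G ((x - B) / A) / G x \<rightarrow> exp (b B) 1{A = 1}\<close>, so by dominated convergence this part is about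
  \<open>\<theta> G x / \<epsilon>\<close> with \<open>\<theta> = E exp (b B) 1{A = 1} < 1\<close>. The range \<open>x/2 < B \<le> x - s\<close> is a convolution
  of two tails, which is at most \<open>\<gamma> G x\<close> for large \<open>s\<close> because \<open>c < -1\<close>. Finally \<open>B > x - s\<close> costs
  \<open>G (x - s) \<approx> exp (b s) G x\<close>, which is at most \<open>\<gamma> G x / \<epsilon>\<close> once \<open>\<epsilon>\<close> is small.
\<close>

lemma borel_measurable_antimono:
  fixes f :: "real \<Rightarrow> real"
  assumes "\<And>x y. x \<le> y \<Longrightarrow> f y \<le> f x"
  shows "f \<in> borel_measurable borel"
proof -
  have "(\<lambda>x. - f x) \<in> borel_measurable borel"
    using assms by (intro borel_measurable_mono monoI) simp
  then show ?thesis
    using borel_measurable_uminus by fastforce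
qed

lemma real_distribution_with_tail:
  fixes H :: "real \<Rightarrow> real"
  assumes antimono: "\<And>x y. x \<le> y \<Longrightarrow> H y \<le> H x" and right_cont: "\<And>x. continuous (at_right x) H"
    and at_bot: "(H \<longlongrightarrow> 1) at_bot" and at_top: "(H \<longlongrightarrow> 0) at_top"
  obtains Q where "real_distribution Q" "\<And>x. measure Q {x<..} = H x"
proof
  define F where "F x = 1 - H x" for x
  have F: "\<And>x y. x \<le> y \<Longrightarrow> F x \<le> F y" "\<And>x. continuous (at_right x) F"
    "(F \<longlongrightarrow> 0) at_bot" "(F \<longlongrightarrow> 1) at_top"
    unfolding F_def using antimono
    by (auto intro!: continuous_intros right_cont tendsto_eq_intros at_bot at_top)
  interpret Q: real_distribution "interval_measure F"
    by (rule real_distribution_interval_measure[OF F])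
  show "real_distribution (interval_measure F)" ..
  fix x
  have "measure (interval_measure F) {x<..} = 1 - measure (interval_measure F) {..x}"
    using Q.prob_compl[of "{..x}"] by (simp add: Compl_eq_Diff_UNIV[symmetric] Compl_atMost)
  also have "measure (interval_measure F) {..x} = F x"
    using cdf_interval_measure[OF F(1-3)] by (simp add: cdf_def fun_eq_iff)
  also have "1 - F x = H x"
    by (simp add: F_def)
  finally show "measure (interval_measure F) {x<..} = H x" .
qed

context pair_prob_space
begin

lemma prob_pair_Times:
  "X \<in> sets M1 \<Longrightarrow> Y \<in> sets M2 \<Longrightarrow> measure (M1 \<Otimes>\<^sub>M M2) (X \<times> Y) = M1.prob X * M2.prob Y"
  by (simp add: measure_def M2.emeasure_pair_measure_Times enn2real_mult)

lemma AE_pair_snd: "{z \<in> space M2. P z} \<in> sets M2 \<Longrightarrow> AE z in M2. P z \<Longrightarrow> AE \<omega> in M1 \<Otimes>\<^sub>M M2. P (snd \<omega>)"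
  by (intro AE_pair_measure) (auto intro!: AE_I2)

lemma prob_pair_snd:
  assumes "{z \<in> space M2. P z} \<in> sets M2"
  shows "measure (M1 \<Otimes>\<^sub>M M2) {\<omega> \<in> space (M1 \<Otimes>\<^sub>M M2). P (snd \<omega>)} = M2.prob {z \<in> space M2. P z}"
proof -
  have "{\<omega> \<in> space (M1 \<Otimes>\<^sub>M M2). P (snd \<omega>)} = space M1 \<times> {z \<in> space M2. P z}"
    by (auto simp: space_pair_measure)
  then show ?thesis
    using prob_pair_Times[OF sets.top assms] by (simp add: M1.prob_space)
qed

lemma indep_set_snd_fst:
  assumes X: "X \<in> measurable M1 N"
  shows "prob_space.indep_set (M1 \<Otimes>\<^sub>M M2)
    {snd -` S \<inter> space (M1 \<Otimes>\<^sub>M M2) | S. S \<in> sets M2}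
    {(\<lambda>\<omega>. X (fst \<omega>)) -` T \<inter> space (M1 \<Otimes>\<^sub>M M2) | T. T \<in> sets N}"
proof (subst P.indep_sets2_eq, intro conjI ballI)
  have "(\<lambda>\<omega>. X (fst \<omega>)) \<in> measurable (M1 \<Otimes>\<^sub>M M2) N"
    using X by measurable
  then show "{(\<lambda>\<omega>. X (fst \<omega>)) -` T \<inter> space (M1 \<Otimes>\<^sub>M M2) | T. T \<in> sets N} \<subseteq> sets (M1 \<Otimes>\<^sub>M M2)"
    by (auto simp: measurable_def)
  show "{snd -` S \<inter> space (M1 \<Otimes>\<^sub>M M2) | S. S \<in> sets M2} \<subseteq> sets (M1 \<Otimes>\<^sub>M M2)"
    using measurable_snd by (auto simp: measurable_def)
  fix E F
  assume "E \<in> {snd -` S \<inter> space (M1 \<Otimes>\<^sub>M M2) | S. S \<in> sets M2}"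
  then obtain S where S: "S \<in> sets M2" and "E = snd -` S \<inter> space (M1 \<Otimes>\<^sub>M M2)"
    by auto
  then have E: "E = space M1 \<times> S"
    using sets.sets_into_space[OF S] by (auto simp: space_pair_measure)
  assume "F \<in> {(\<lambda>\<omega>. X (fst \<omega>)) -` T \<inter> space (M1 \<Otimes>\<^sub>M M2) | T. T \<in> sets N}"
  then obtain T where T: "T \<in> sets N" and "F = (\<lambda>\<omega>. X (fst \<omega>)) -` T \<inter> space (M1 \<Otimes>\<^sub>M M2)"
    by auto
  then have F: "F = (X -` T \<inter> space M1) \<times> space M2"
    by (auto simp: space_pair_measure)
  have U: "X -` T \<inter> space M1 \<in> sets M1"
    using X T by (rule measurable_sets)
  have "E \<inter> F = (X -` T \<inter> space M1) \<times> S"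
    unfolding E F using sets.sets_into_space[OF S] by auto
  then show "measure (M1 \<Otimes>\<^sub>M M2) (E \<inter> F) = measure (M1 \<Otimes>\<^sub>M M2) E * measure (M1 \<Otimes>\<^sub>M M2) F"
    unfolding E F using S U by (simp add: prob_pair_Times M1.prob_space M2.prob_space)
qed

lemma prob_pair_eq_integral:
  assumes S: "S \<in> sets (M1 \<Otimes>\<^sub>M M2)"
  shows "measure (M1 \<Otimes>\<^sub>M M2) S = (\<integral>\<omega>. M2.prob (Pair \<omega> -` S) \<partial>M1)"
proof -
  have measurable: "(\<lambda>\<omega>. M2.prob (Pair \<omega> -` S)) \<in> borel_measurable M1"
    unfolding measure_def using M2.measurable_emeasure_Pair[OF S] by measurable
  have "emeasure (M1 \<Otimes>\<^sub>M M2) S = (\<integral>\<^sup>+\<omega>. M2.prob (Pair \<omega> -` S) \<partial>M1)"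
    by (simp add: M2.emeasure_pair_measure_alt[OF S] M2.emeasure_eq_measure)
  also have "\<dots> = ennreal (\<integral>\<omega>. M2.prob (Pair \<omega> -` S) \<partial>M1)"
    using measurable by (intro nn_integral_eq_integral M1.integrable_const_bound[where B = 1]) auto
  finally show ?thesis
    by (simp add: measure_def integral_nonneg)
qed

end

lemma pair_prob_space_real_distribution:
  "prob_space M \<Longrightarrow> real_distribution Q \<Longrightarrow> pair_prob_space M Q"
  by (simp add: pair_prob_space_def pair_sigma_finite_def real_distribution_def prob_space_imp_sigma_finite)

lemma product_extension:
  fixes M :: "'a measure" and Q :: "real measure"
  assumes M: "prob_space M" and Q: "real_distribution Q" and X: "X \<in> measurable M N"
  shows "prob_space (M \<Otimes>\<^sub>M Q)" and "distr (M \<Otimes>\<^sub>M Q) M fst = M"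
    and "snd \<in> borel_measurable (M \<Otimes>\<^sub>M Q)"
    and "prob_space.indep_set (M \<Otimes>\<^sub>M Q)
      {snd -` S \<inter> space (M \<Otimes>\<^sub>M Q) | S. S \<in> sets borel}
      {(\<lambda>\<omega>. X (fst \<omega>)) -` T \<inter> space (M \<Otimes>\<^sub>M Q) | T. T \<in> sets N}"
    and "measure (M \<Otimes>\<^sub>M Q) {\<omega> \<in> space (M \<Otimes>\<^sub>M Q). snd \<omega> > x} = measure Q {x<..}"
    and "AE z in Q. 0 \<le> z \<Longrightarrow> AE \<omega> in M \<Otimes>\<^sub>M Q. 0 \<le> snd \<omega>"
proof -
  interpret Q: real_distribution Q by (rule Q)
  interpret pair_prob_space M Q
    using M Q by (rule pair_prob_space_real_distribution)
  show "prob_space (M \<Otimes>\<^sub>M Q)" "distr (M \<Otimes>\<^sub>M Q) M fst = M" "snd \<in> borel_measurable (M \<Otimes>\<^sub>M Q)"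
    by (simp_all add: P.prob_space_axioms Q.distr_pair_fst)
  show "prob_space.indep_set (M \<Otimes>\<^sub>M Q)
      {snd -` S \<inter> space (M \<Otimes>\<^sub>M Q) | S. S \<in> sets borel}
      {(\<lambda>\<omega>. X (fst \<omega>)) -` T \<inter> space (M \<Otimes>\<^sub>M Q) | T. T \<in> sets N}"
    using indep_set_snd_fst[OF X] by simp
  show "measure (M \<Otimes>\<^sub>M Q) {\<omega> \<in> space (M \<Otimes>\<^sub>M Q). snd \<omega> > x} = measure Q {x<..}"
    using prob_pair_snd[of "\<lambda>z. x < z"] by (simp add: greaterThan_def)
  show "AE \<omega> in M \<Otimes>\<^sub>M Q. 0 \<le> snd \<omega>" if "AE z in Q. 0 \<le> z"
    using that by (rule AE_pair_snd[rotated]) measurable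
qed

lemma prob_affine_snd_greater:
  fixes M1 :: "'a measure" and M2 :: "real measure"
  assumes "prob_space M1" "real_distribution M2"
    and [measurable]: "A \<in> borel_measurable M1" "B \<in> borel_measurable M1"
    and A_pos: "AE \<omega> in M1. 0 < A \<omega>"
  shows "measure (M1 \<Otimes>\<^sub>M M2) {\<omega> \<in> space (M1 \<Otimes>\<^sub>M M2). A (fst \<omega>) * snd \<omega> + B (fst \<omega>) > x}
    = (\<integral>\<omega>. measure M2 {(x - B \<omega>) / A \<omega><..} \<partial>M1)"
proof -
  interpret M2: real_distribution M2 by fact
  interpret pair_prob_space M1 M2
    using assms(1,2) by (rule pair_prob_space_real_distribution)
  have [measurable]: "snd \<in> borel_measurable (M1 \<Otimes>\<^sub>M M2)"
    using measurable_snd[of M1 M2] by (simp add: measurable_cong_sets[OF refl M2.events_eq_borel])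
  have tail_measurable: "(\<lambda>t. M2.prob {t<..}) \<in> borel_measurable borel"
    by (rule borel_measurable_antimono, rule M2.finite_measure_mono) auto
  have "(\<lambda>\<omega>. (x - B \<omega>) / A \<omega>) \<in> borel_measurable M1"
    by measurable
  from measurable_compose[OF this tail_measurable]
  have tail_comp_measurable: "(\<lambda>\<omega>. M2.prob {(x - B \<omega>) / A \<omega><..}) \<in> borel_measurable M1"
    by (simp add: comp_def)
  define S where "S = {\<omega> \<in> space (M1 \<Otimes>\<^sub>M M2). A (fst \<omega>) * snd \<omega> + B (fst \<omega>) > x}"
  have S: "S \<in> sets (M1 \<Otimes>\<^sub>M M2)"
    unfolding S_def by measurable
  have "AE \<omega> in M1. Pair \<omega> -` S = {(x - B \<omega>) / A \<omega><..}"
    using A_pos AE_space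
    by eventually_elim (auto simp: S_def space_pair_measure field_simps)
  then have "AE \<omega> in M1. M2.prob (Pair \<omega> -` S) = M2.prob {(x - B \<omega>) / A \<omega><..}"
    by eventually_elim simp
  then have "(\<integral>\<omega>. M2.prob (Pair \<omega> -` S) \<partial>M1) = (\<integral>\<omega>. M2.prob {(x - B \<omega>) / A \<omega><..} \<partial>M1)"
    using tail_comp_measurable M2.measurable_emeasure_Pair[OF S]
    by (intro integral_cong_AE) (auto simp: measure_def)
  then show ?thesis
    using prob_pair_eq_integral[OF S] by (simp add: S_def)
qed

lemma (in prob_space) integrable_exp_if_summable_tail:
  fixes X :: "'a \<Rightarrow> real"
  assumes X[measurable]: "X \<in> borel_measurable M" and b: "0 < b"
    and summable: "summable (\<lambda>n. exp (b * (real n + 1)) * prob {\<omega> \<in> space M. X \<omega> > real n})"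
  shows "integrable M (\<lambda>\<omega>. exp (b * X \<omega>))"
proof -
  define t where "t n = exp (b * (real n + 1))" for n :: nat
  define D where "D \<omega> = (\<Sum>n. ennreal (t n) * indicator {\<omega> \<in> space M. X \<omega> > real n} \<omega>)" for \<omega>
  have D_measurable[measurable]: "D \<in> borel_measurable M"
    unfolding D_def by measurable
  have bound: "ennreal (exp (b * X \<omega>)) \<le> 1 + D \<omega>" if \<omega>: "\<omega> \<in> space M" for \<omega>
  proof (cases "X \<omega> \<le> 0")
    case True
    then have "exp (b * X \<omega>) \<le> 1"
      using b by (simp add: mult_nonneg_nonpos)
    then show ?thesis
      by (simp add: add_increasing2)
  next
    case False
    define n where "n = nat \<lceil>X \<omega>\<rceil> - 1"
    have "real n < X \<omega>" "X \<omega> \<le> real n + 1"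
      using False unfolding n_def by linarith+
    then have "ennreal (exp (b * X \<omega>)) \<le> ennreal (t n) * indicator {\<omega> \<in> space M. X \<omega> > real n} \<omega>"
      using \<omega> b by (auto simp: t_def intro!: ennreal_leI)
    also have "\<dots> \<le> D \<omega>"
      unfolding D_def using sum_le_suminf[OF summableI, of "{n}"] by simp
    finally show ?thesis
      by (simp add: add_increasing)
  qed
  have "(\<integral>\<^sup>+\<omega>. D \<omega> \<partial>M) = (\<Sum>n. ennreal (t n) * emeasure M {\<omega> \<in> space M. X \<omega> > real n})"
    unfolding D_def by (subst nn_integral_suminf) (auto intro!: suminf_cong nn_integral_cmult_indicator)
  also have "\<dots> = (\<Sum>n. ennreal (t n * prob {\<omega> \<in> space M. X \<omega> > real n}))"
    by (simp add: emeasure_eq_measure ennreal_mult t_def)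
  also have "\<dots> \<noteq> top"
    unfolding t_def by (rule ennreal_suminf_neq_top[OF summable]) simp
  finally have D_finite: "(\<integral>\<^sup>+\<omega>. D \<omega> \<partial>M) \<noteq> top" .
  have "(\<integral>\<^sup>+\<omega>. exp (b * X \<omega>) \<partial>M) \<le> (\<integral>\<^sup>+\<omega>. 1 + D \<omega> \<partial>M)"
    by (rule nn_integral_mono) (rule bound)
  also have "\<dots> = 1 + (\<integral>\<^sup>+\<omega>. D \<omega> \<partial>M)"
    by (subst nn_integral_add) (auto simp: emeasure_space_1)
  also have "\<dots> < \<infinity>"
    using D_finite by (simp add: top.not_eq_extremum)
  finally show ?thesis
    by (intro integrableI_nonneg) auto
qed

locale exponential_tail = prob_space M for M :: "'a measure" +
  fixes B :: "'a \<Rightarrow> real" and a b c :: real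
  assumes B_measurable[measurable]: "B \<in> borel_measurable M"
    and a_pos: "0 < a" and b_pos: "0 < b" and c_less: "c < -1"
    and tail_equiv: "(\<lambda>x. measure M {\<omega> \<in> space M. B \<omega> > x}) \<sim>[at_top] (\<lambda>x. a * x powr c * exp (- b * x))"
begin

definition G :: "real \<Rightarrow> real" where "G x = measure M {\<omega> \<in> space M. B \<omega> > x}"
definition L :: "real \<Rightarrow> real" where "L x = a * x powr c * exp (- b * x)"

lemma G_nonneg: "0 \<le> G x"
  by (simp add: G_def)

lemma G_le_1: "G x \<le> 1"
  by (simp add: G_def)

lemma G_antimono: "x \<le> y \<Longrightarrow> G y \<le> G x"
  unfolding G_def by (rule finite_measure_mono) auto

lemma borel_measurable_G[measurable]: "G \<in> borel_measurable borel"
  by (rule borel_measurable_antimono) (rule G_antimono)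

lemma G_eq_1_minus_cdf: "G x = 1 - cdf (distr M borel B) x"
proof -
  have "cdf (distr M borel B) x = prob {\<omega> \<in> space M. B \<omega> \<le> x}"
    by (simp add: cdf_def measure_distr vimage_def Int_def conj_commute)
  also have "\<dots> = 1 - G x"
    unfolding G_def by (subst prob_compl[symmetric]) (auto intro!: arg_cong[where f=prob])
  finally show ?thesis by simp
qed

lemma G_continuous_at_right: "continuous (at_right x) G"
proof -
  interpret D: real_distribution "distr M borel B" by simp
  show ?thesis
    unfolding G_eq_1_minus_cdf[abs_def] by (intro continuous_intros D.cdf_is_right_cont)
qed

lemma L_pos: "0 < x \<Longrightarrow> 0 < L x"
  using a_pos by (simp add: L_def)

lemma L_ratio: "0 < x \<Longrightarrow> 0 < y \<Longrightarrow> L y / L x = (y / x) powr c * exp (b * (x - y))"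
  unfolding L_def using a_pos by (simp add: powr_divide exp_diff exp_minus field_simps)

lemma G_over_L_tendsto: "((\<lambda>x. G x / L x) \<longlongrightarrow> 1) at_top"
proof (rule asymp_equivD_strong[OF tail_equiv[folded G_def L_def[abs_def]]])
  show "\<forall>\<^sub>F x in at_top. G x \<noteq> 0 \<or> L x \<noteq> 0"
    using eventually_gt_at_top[of 0] by eventually_elim (use L_pos in force)
qed

lemma G_L_comparable: "\<exists>T>0. \<forall>x\<ge>T. G x \<le> 2 * L x \<and> L x \<le> 2 * G x"
proof -
  have "\<forall>\<^sub>F x in at_top. dist (G x / L x) 1 < 1/2"
    using G_over_L_tendsto by (rule tendstoD) simp
  then have "\<forall>\<^sub>F x in at_top. 0 < x \<and> G x \<le> 2 * L x \<and> L x \<le> 2 * G x"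
    using eventually_gt_at_top[of 0]
  proof eventually_elim
    case (elim x)
    then have L: "0 < L x" and "\<bar>G x / L x - 1\<bar> < 1/2"
      using L_pos by (auto simp: dist_real_def)
    then have "1/2 < G x / L x" "G x / L x < 3/2"
      by linarith+
    with L show ?case
      using elim by (auto simp: field_simps)
  qed
  then show ?thesis
    by (auto simp: eventually_at_top_linorder intro: exI[of _ "max _ 1"])
qed

lemma G_pos: "0 < G x"
proof -
  obtain T where T: "0 < T" "\<forall>x\<ge>T. L x \<le> 2 * G x"
    using G_L_comparable by auto
  have "0 < L (max x T)"
    using T L_pos by auto
  also have "\<dots> \<le> 2 * G (max x T)"
    using T by auto
  also have "\<dots> \<le> 2 * G x"
    by (simp add: G_antimono)
  finally show ?thesis by simp
qed

lemma G_tendsto_0: "(G \<longlongrightarrow> 0) at_top"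
proof -
  have "(L \<longlongrightarrow> 0) at_top"
    unfolding L_def using b_pos c_less by real_asymp
  then have "((\<lambda>x. G x / L x * L x) \<longlongrightarrow> 1 * 0) at_top"
    by (intro tendsto_mult G_over_L_tendsto)
  moreover have "\<forall>\<^sub>F x in at_top. G x / L x * L x = G x"
    using eventually_gt_at_top[of 0] by eventually_elim (use L_pos in force)
  ultimately show ?thesis
    using Lim_transform_eventually by fastforce
qed

lemma G_ratio_tendsto:
  assumes u: "filterlim u at_top at_top" and lim: "((\<lambda>x. L (u x) / L x) \<longlongrightarrow> l) at_top"
  shows "((\<lambda>x. G (u x) / G x) \<longlongrightarrow> l) at_top"
proof -
  have "((\<lambda>x. G (u x) / L (u x) * (L (u x) / L x) * inverse (G x / L x)) \<longlongrightarrow> 1 * l * inverse 1) at_top"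
    by (intro tendsto_mult tendsto_inverse lim G_over_L_tendsto filterlim_compose[OF G_over_L_tendsto u]) simp
  moreover have "\<forall>\<^sub>F x in at_top. G (u x) / L (u x) * (L (u x) / L x) * inverse (G x / L x) = G (u x) / G x"
    using eventually_gt_at_top[of 0] eventually_compose_filterlim[OF eventually_gt_at_top[of 0] u]
  proof eventually_elim
    case (elim x)
    then have "0 < L x" "0 < L (u x)" "0 < G x"
      using L_pos G_pos by auto
    then show ?case by (simp add: field_simps)
  qed
  ultimately show ?thesis
    using Lim_transform_eventually by fastforce
qed

lemma G_shift_ratio_tendsto: "((\<lambda>x. G (x - \<beta>) / G x) \<longlongrightarrow> exp (b * \<beta>)) at_top"
proof (rule G_ratio_tendsto)
  show "filterlim (\<lambda>x. x - \<beta>) at_top at_top"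
    by real_asymp
  have "((\<lambda>x. ((x - \<beta>) / x) powr c * exp (b * \<beta>)) \<longlongrightarrow> exp (b * \<beta>)) at_top"
    by real_asymp
  moreover have "\<forall>\<^sub>F x in at_top. ((x - \<beta>) / x) powr c * exp (b * \<beta>) = L (x - \<beta>) / L x"
    using eventually_gt_at_top[of "max 0 \<beta>"] by eventually_elim (simp add: L_ratio)
  ultimately show "((\<lambda>x. L (x - \<beta>) / L x) \<longlongrightarrow> exp (b * \<beta>)) at_top"
    by (rule Lim_transform_eventually)
qed

lemma G_dilate_ratio_tendsto:
  assumes \<alpha>: "0 < \<alpha>" "\<alpha> < 1"
  shows "((\<lambda>x. G ((x - \<beta>) / \<alpha>) / G x) \<longlongrightarrow> 0) at_top"
proof (rule G_ratio_tendsto)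
  show "filterlim (\<lambda>x. (x - \<beta>) / \<alpha>) at_top at_top"
    using \<alpha> by real_asymp
  define d where "d = b * (1 / \<alpha> - 1)"
  have "0 < d"
    using \<alpha> b_pos by (simp add: d_def field_simps)
  then have "((\<lambda>x. ((x - \<beta>) / x / \<alpha>) powr c * exp (b * \<beta> / \<alpha> - d * x)) \<longlongrightarrow> 0) at_top"
    using \<alpha> by real_asymp
  moreover have "\<forall>\<^sub>F x in at_top. ((x - \<beta>) / x / \<alpha>) powr c * exp (b * \<beta> / \<alpha> - d * x) = L ((x - \<beta>) / \<alpha>) / L x"
    using eventually_gt_at_top[of "max 0 \<beta>"]
  proof eventually_elim
    case (elim x)
    have "b * \<beta> / \<alpha> - d * x = b * (x - (x - \<beta>) / \<alpha>)"
      using \<alpha> by (simp add: d_def field_simps)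
    with elim \<alpha> show ?case
      by (simp add: L_ratio mult.commute)
  qed
  ultimately show "((\<lambda>x. L ((x - \<beta>) / \<alpha>) / L x) \<longlongrightarrow> 0) at_top"
    by (rule Lim_transform_eventually)
qed

lemma G_dilate_ratio_bound:
  "\<exists>X. \<forall>x\<ge>X. \<forall>\<alpha> \<beta>. 0 < \<alpha> \<longrightarrow> \<alpha> \<le> 1 \<longrightarrow> \<beta> \<le> x / 2 \<longrightarrow>
     G ((x - \<beta>) / \<alpha>) / G x \<le> 4 * (1/2) powr c * exp (b * \<beta>)"
proof -
  obtain T where T: "0 < T" "\<forall>x\<ge>T. G x \<le> 2 * L x \<and> L x \<le> 2 * G x"
    using G_L_comparable by auto
  have "G ((x - \<beta>) / \<alpha>) / G x \<le> 4 * (1/2) powr c * exp (b * \<beta>)"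
    if x: "2 * T \<le> x" and \<alpha>: "0 < \<alpha>" "\<alpha> \<le> 1" and \<beta>: "\<beta> \<le> x / 2" for x \<alpha> \<beta>
  proof -
    define y where "y = x - \<beta>"
    have y: "T \<le> y" "x / 2 \<le> y" "0 < x" "0 < y"
      using x \<beta> T by (auto simp: y_def)
    have "y \<le> y / \<alpha>"
      using \<alpha> y by (simp add: field_simps)
    then have "G (y / \<alpha>) \<le> 2 * L y"
      using G_antimono T y by force
    moreover have "L x \<le> 2 * G x" "0 < L x"
      using T x y L_pos by auto
    ultimately have "G (y / \<alpha>) / G x \<le> (2 * L y) / (L x / 2)"
      using G_pos G_nonneg L_pos[of y] y by (intro frac_le) auto
    also have "\<dots> = 4 * (L y / L x)"
      by simp
    also have "L y / L x = (y / x) powr c * exp (b * \<beta>)"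
      using y by (simp add: L_ratio y_def)
    also have "(y / x) powr c \<le> (1/2) powr c"
      using c_less y by (intro powr_mono2') (auto simp: field_simps)
    finally show ?thesis
      by (simp add: y_def)
  qed
  then show ?thesis
    by blast
qed

lemma integrable_exp_bB: "integrable M (\<lambda>\<omega>. exp (b * B \<omega>))"
proof (rule integrable_exp_if_summable_tail[OF B_measurable b_pos])
  obtain T where T: "0 < T" "\<forall>x\<ge>T. G x \<le> 2 * L x"
    using G_L_comparable by auto
  have "exp (b * (real n + 1)) * G n \<le> 2 * a * exp b * real n powr c" if "T \<le> real n" for n
  proof -
    have "exp (b * (real n + 1)) * G n \<le> exp (b * (real n + 1)) * (2 * L n)"
      using T that by simp
    also have "\<dots> = 2 * a * exp b * real n powr c"
      unfolding L_def by (simp add: exp_add[symmetric] algebra_simps exp_minus_inverse)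
    finally show ?thesis .
  qed
  then have "\<forall>n\<ge>nat \<lceil>T\<rceil>. norm (exp (b * (real n + 1)) * G n) \<le> 2 * a * exp b * real n powr c"
    using G_nonneg by (auto simp: nat_le_iff ceiling_le_iff)
  moreover have "summable (\<lambda>n. 2 * a * exp b * real n powr c)"
    using summable_real_powr_iff[of c] c_less by (intro summable_mult) simp
  ultimately have "summable (\<lambda>n. exp (b * (real n + 1)) * G n)"
    by (rule summable_comparison_test[OF exI])
  then show "summable (\<lambda>n. exp (b * (real n + 1)) * prob {\<omega> \<in> space M. B \<omega> > real n})"
    by (simp add: G_def)
qed

lemma L_product:
  assumes "0 < u" "0 < y" "0 < x"
  shows "L u * L y = a * u powr c * (y / x) powr c * exp (b * (x - u - y)) * L x"
proof -
  have "exp (- b * u) * exp (- b * y) = exp (b * (x - u - y)) * exp (- b * x)"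
    by (simp flip: exp_add add: algebra_simps)
  moreover have "y powr c = (y / x) powr c * x powr c"
    using assms by (simp add: powr_divide)
  ultimately show ?thesis
    unfolding L_def by (simp add: ac_simps)
qed

lemma G_product_bound:
  "\<exists>K>0. \<exists>T>0. \<forall>u x. T \<le> u \<longrightarrow> T \<le> x - u - 1 \<longrightarrow> x \<le> 4 * (x - u - 1) \<longrightarrow>
     G u * G (x - u - 1) \<le> K * u powr c * G x"
proof -
  obtain T where T: "0 < T" "\<forall>x\<ge>T. G x \<le> 2 * L x \<and> L x \<le> 2 * G x"
    using G_L_comparable by auto
  define K where "K = 8 * a * exp b * (1/4) powr c"
  have "G u * G (x - u - 1) \<le> K * u powr c * G x"
    if u: "T \<le> u" and y: "T \<le> x - u - 1" "x \<le> 4 * (x - u - 1)" for u x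
  proof -
    define y where "y = x - u - 1"
    have pos: "0 < u" "0 < y" "0 < x"
      using T u y by (auto simp: y_def)
    have ratio: "(y / x) powr c \<le> (1/4) powr c"
      using c_less pos y by (intro powr_mono2') (auto simp: y_def field_simps)
    have "L u * L y = a * u powr c * (y / x) powr c * exp b * L x"
      using L_product[OF pos] by (simp add: y_def)
    also have "\<dots> \<le> a * u powr c * (1/4) powr c * exp b * L x"
      using ratio a_pos L_pos[of x] pos
      by (intro mult_right_mono mult_left_mono) auto
    finally have L_prod: "L u * L y \<le> a * u powr c * (1/4) powr c * exp b * L x" .
    have "G u * G y \<le> (2 * L u) * (2 * L y)"
      using T u y G_nonneg by (intro mult_mono) (auto simp: y_def)
    also have "\<dots> \<le> 4 * (a * u powr c * (1/4) powr c * exp b * L x)"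
      using L_prod by simp
    also have "\<dots> \<le> 4 * (a * u powr c * (1/4) powr c * exp b * (2 * G x))"
      using T pos u y a_pos by (intro mult_left_mono) (auto simp: y_def)
    finally show ?thesis
      by (simp add: K_def y_def mult_ac)
  qed
  moreover have "0 < K"
    using a_pos by (simp add: K_def)
  ultimately show ?thesis
    using T(1) by blast
qed

definition convolution_part :: "real \<Rightarrow> real \<Rightarrow> 'a \<Rightarrow> real" where
  "convolution_part s x \<omega> = (if x / 2 < B \<omega> \<and> B \<omega> \<le> x - s then G (x - B \<omega>) else 0)"

lemma convolution_part_measurable[measurable]: "convolution_part s x \<in> borel_measurable M"
  unfolding convolution_part_def by measurable

lemma integrable_indicator_B_greater: "integrable M (indicator {\<omega> \<in> space M. B \<omega> > x} :: 'a \<Rightarrow> real)"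
  by (simp add: integrable_indicator_iff emeasure_eq_measure Int_absorb2)

lemma integrable_convolution_part: "integrable M (convolution_part s x)"
  by (rule integrable_const_bound[where B = 1]) (auto simp: convolution_part_def G_nonneg G_le_1)

lemma convolution_part_le_sum:
  assumes "0 \<le> s" "\<omega> \<in> space M"
  shows "convolution_part s x \<omega> \<le>
    (\<Sum>k\<in>{k \<in> {..<nat \<lceil>x\<rceil>}. s + real k < x / 2}. G (s + real k) * indicator {\<omega> \<in> space M. B \<omega> > x - s - real k - 1} \<omega>)"
    (is "_ \<le> sum ?g ?K")
proof (cases "x / 2 < B \<omega> \<and> B \<omega> \<le> x - s")
  case True
  define k where "k = nat \<lfloor>x - B \<omega> - s\<rfloor>"
  have k: "s + real k \<le> x - B \<omega>" "x - B \<omega> < s + real k + 1"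
    using True unfolding k_def by linarith+
  then have "k \<in> ?K"
    using True assms by auto linarith
  have "convolution_part s x \<omega> \<le> G (s + real k)"
    using True k by (simp add: convolution_part_def G_antimono)
  also have "\<dots> = ?g k"
    using k assms by (simp add: indicator_def)
  also have "\<dots> \<le> sum ?g ?K"
    using \<open>k \<in> ?K\<close> by (intro member_le_sum) (auto simp: G_nonneg)
  finally show ?thesis .
qed (auto simp: convolution_part_def intro!: sum_nonneg G_nonneg)

text \<open>The middle range \<open>x/2 < B \<le> x - s\<close> contributes little because \<open>\<Sum>n. n powr c\<close> converges.\<close>

lemma convolution_part_small:
  assumes "0 < \<gamma>"
  shows "\<exists>s::nat. \<exists>X. \<forall>x\<ge>X. integral\<^sup>L M (convolution_part s x) \<le> \<gamma> * G x"
proof -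
  obtain K T where K: "0 < K" "0 < T"
    and product_bound: "\<And>u x. T \<le> u \<Longrightarrow> T \<le> x - u - 1 \<Longrightarrow> x \<le> 4 * (x - u - 1) \<Longrightarrow> G u * G (x - u - 1) \<le> K * u powr c * G x"
    using G_product_bound by blast
  have summable: "summable (\<lambda>n. real n powr c)"
    using summable_real_powr_iff[of c] c_less by simp
  obtain N where N: "\<forall>n\<ge>N. norm (\<Sum>i. real (i + n) powr c) < \<gamma> / K"
    using suminf_exist_split[OF _ summable, of "\<gamma> / K"] assms K by auto
  define s :: nat where "s = max N (nat \<lceil>T\<rceil>)"
  have s: "T \<le> real s" "N \<le> s"
    unfolding s_def by linarith+
  have summable_s: "summable (\<lambda>k. real (k + s) powr c)"
    using summable_ignore_initial_segment[OF summable, of s] by simp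
  have "integral\<^sup>L M (convolution_part s x) \<le> \<gamma> * G x" if x: "2 * T + 4 \<le> x" for x
  proof -
    define KK where "KK = {k \<in> {..<nat \<lceil>x\<rceil>}. real s + real k < x / 2}"
    have "convolution_part s x \<omega> \<le> (\<Sum>k\<in>KK. G (s + real k) * indicator {\<omega> \<in> space M. B \<omega> > x - s - real k - 1} \<omega>)"
      if "\<omega> \<in> space M" for \<omega>
      unfolding KK_def by (rule convolution_part_le_sum) (use that in auto)
    then have "integral\<^sup>L M (convolution_part s x)
        \<le> (\<integral>\<omega>. (\<Sum>k\<in>KK. G (s + real k) * indicator {\<omega> \<in> space M. B \<omega> > x - s - real k - 1} \<omega>) \<partial>M)"
      by (intro integral_mono integrable_convolution_part Bochner_Integration.integrable_sum integrable_mult_right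
          integrable_indicator_B_greater)
    also have "\<dots> = (\<Sum>k\<in>KK. G (s + real k) * G (x - s - real k - 1))"
      by (subst Bochner_Integration.integral_sum) (simp_all add: integrable_indicator_B_greater G_def)
    also have "\<dots> \<le> (\<Sum>k\<in>KK. K * real (k + s) powr c * G x)"
    proof (rule sum_mono)
      fix k assume "k \<in> KK"
      then have "T \<le> x - (s + real k) - 1" "x \<le> 4 * (x - (s + real k) - 1)"
        using x s K(2) unfolding KK_def by auto
      then show "G (s + real k) * G (x - s - real k - 1) \<le> K * real (k + s) powr c * G x"
        using product_bound[of "s + real k" x] s by (simp add: add.commute diff_diff_eq)
    qed
    also have "\<dots> = K * G x * (\<Sum>k\<in>KK. real (k + s) powr c)"
      by (simp add: sum_distrib_left mult_ac)
    also have "\<dots> \<le> K * G x * (\<Sum>k. real (k + s) powr c)"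
      using K G_nonneg by (intro mult_left_mono sum_le_suminf[OF summable_s]) (auto simp: KK_def)
    also have "\<dots> \<le> K * G x * (\<gamma> / K)"
      using K G_nonneg N s by (intro mult_left_mono) (auto simp: less_imp_le add.commute)
    finally show ?thesis
      using K by (simp add: mult.commute)
  qed
  then show ?thesis
    by blast
qed

lemma min_tail_distribution:
  assumes \<epsilon>: "0 < \<epsilon>" "\<epsilon> \<le> G 0"
  obtains Q where "real_distribution Q" "\<And>x. measure Q {x<..} = min 1 (G x / \<epsilon>)" "AE z in Q. 0 \<le> z"
proof -
  obtain Q where Q: "real_distribution Q" and tail_Q: "\<And>x. measure Q {x<..} = min 1 (G x / \<epsilon>)"
  proof (rule real_distribution_with_tail)
    show "min 1 (G y / \<epsilon>) \<le> min 1 (G x / \<epsilon>)" if "x \<le> y" for x y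
      using \<epsilon> by (intro min.mono order.refl divide_right_mono G_antimono that) simp
    show "continuous (at_right x) (\<lambda>x. min 1 (G x / \<epsilon>))" for x
      by (intro continuous_intros G_continuous_at_right) (use \<epsilon> in simp)
    have "\<forall>\<^sub>F x in at_bot. min 1 (G x / \<epsilon>) = 1"
      using eventually_le_at_bot[of 0] by eventually_elim (use \<epsilon> G_antimono in force)
    then show "((\<lambda>x. min 1 (G x / \<epsilon>)) \<longlongrightarrow> 1) at_bot"
      by (rule tendsto_eventually)
    show "((\<lambda>x. min 1 (G x / \<epsilon>)) \<longlongrightarrow> 0) at_top"
      using tendsto_min[OF tendsto_const tendsto_divide_zero[OF G_tendsto_0], of 1 \<epsilon>] by simp
  qed blast
  have "measure Q {0<..} = 1"
    using \<epsilon> by (simp add: tail_Q)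
  then have "AE z in Q. z \<in> {0<..}"
    using Q by (intro prob_space.AE_prob_1) (auto simp: real_distribution_def)
  then have "AE z in Q. 0 \<le> z"
    by eventually_elim simp
  with Q tail_Q show ?thesis
    by (rule that)
qed

lemma min_tail_asymp_equiv:
  assumes "0 < \<epsilon>"
  shows "(\<lambda>x. min 1 (G x / \<epsilon>)) \<sim>[at_top] (\<lambda>x. 1 / \<epsilon> * G x)"
proof (rule asymp_equiv_refl_ev)
  show "\<forall>\<^sub>F x in at_top. min 1 (G x / \<epsilon>) = 1 / \<epsilon> * G x"
    using order_tendstoD(2)[OF G_tendsto_0 assms] by eventually_elim (use assms in simp)
qed

end

locale perpetuity = exponential_tail +
  fixes A :: "'a \<Rightarrow> real"
  assumes A_measurable[measurable]: "A \<in> borel_measurable M"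
    and A_range: "AE \<omega> in M. 0 < A \<omega> \<and> A \<omega> \<le> 1"
    and exp_moment_A_eq_1: "(\<integral>\<^sup>+\<omega>. ennreal (exp (b * B \<omega>) * indicator {\<omega>. A \<omega> = 1} \<omega>) \<partial>M) < 1"
begin

definition \<theta> :: real where "\<theta> = (\<integral>\<omega>. exp (b * B \<omega>) * indicator {\<omega>. A \<omega> = 1} \<omega> \<partial>M)"

lemma integrable_exp_bB_A_eq_1: "integrable M (\<lambda>\<omega>. exp (b * B \<omega>) * indicator {\<omega>. A \<omega> = 1} \<omega>)"
proof (rule Bochner_Integration.integrable_bound[OF integrable_exp_bB])
  have "(\<lambda>\<omega>. exp (b * B \<omega>) * indicator {\<omega>. A \<omega> = 1} \<omega>) = (\<lambda>\<omega>. if A \<omega> = 1 then exp (b * B \<omega>) else 0)"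
    by (auto simp: indicator_def)
  then show "(\<lambda>\<omega>. exp (b * B \<omega>) * indicator {\<omega>. A \<omega> = 1} \<omega>) \<in> borel_measurable M"
    by simp
qed (auto simp: indicator_def)

lemma \<theta>_less_1: "\<theta> < 1"
proof -
  have "(\<integral>\<^sup>+\<omega>. ennreal (exp (b * B \<omega>) * indicator {\<omega>. A \<omega> = 1} \<omega>) \<partial>M) = ennreal \<theta>"
    unfolding \<theta>_def by (rule nn_integral_eq_integral[OF integrable_exp_bB_A_eq_1]) auto
  then show ?thesis
    using exp_moment_A_eq_1 by simp
qed

definition bulk_ratio :: "real \<Rightarrow> 'a \<Rightarrow> real" where
  "bulk_ratio x \<omega> = (if B \<omega> \<le> x / 2 then G ((x - B \<omega>) / A \<omega>) else 0) / G x"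

lemma bulk_ratio_measurable[measurable]: "bulk_ratio x \<in> borel_measurable M"
  unfolding bulk_ratio_def by measurable

lemma bulk_ratio_nonneg: "0 \<le> bulk_ratio x \<omega>"
  by (simp add: bulk_ratio_def G_nonneg)

lemma integrable_bulk_ratio: "integrable M (bulk_ratio x)"
  by (rule integrable_const_bound[where B = "1 / G x"])
     (auto simp: bulk_ratio_def G_nonneg G_le_1 G_pos divide_right_mono)

text \<open>Dominated convergence: the ratio tends to \<open>exp (b * B)\<close> where \<open>A = 1\<close> and to \<open>0\<close> where \<open>A < 1\<close>.\<close>

lemma bulk_ratio_tendsto: "((\<lambda>x. integral\<^sup>L M (bulk_ratio x)) \<longlongrightarrow> \<theta>) at_top"
  unfolding \<theta>_def
proof (rule integral_dominated_convergence_at_top[where w = "\<lambda>\<omega>. 4 * (1/2) powr c * exp (b * B \<omega>)"])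
  show "(\<lambda>\<omega>. exp (b * B \<omega>) * indicator {\<omega>. A \<omega> = 1} \<omega>) \<in> borel_measurable M"
    using integrable_exp_bB_A_eq_1 by blast
  show "integrable M (\<lambda>\<omega>. 4 * (1/2) powr c * exp (b * B \<omega>))"
    using integrable_exp_bB by simp
  show "AE \<omega> in M. ((\<lambda>x. bulk_ratio x \<omega>) \<longlongrightarrow> exp (b * B \<omega>) * indicator {\<omega>. A \<omega> = 1} \<omega>) at_top"
    using A_range
  proof eventually_elim
    case (elim \<omega>)
    have eq: "\<forall>\<^sub>F x in at_top. G ((x - B \<omega>) / A \<omega>) / G x = bulk_ratio x \<omega>"
      using eventually_ge_at_top[of "2 * B \<omega>"] by eventually_elim (simp add: bulk_ratio_def)
    show ?case
    proof (cases "A \<omega> = 1")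
      case True
      with eq have "\<forall>\<^sub>F x in at_top. G (x - B \<omega>) / G x = bulk_ratio x \<omega>"
        by simp
      with True show ?thesis
        using Lim_transform_eventually[OF G_shift_ratio_tendsto] by simp
    next
      case False
      then show ?thesis
        using elim Lim_transform_eventually[OF G_dilate_ratio_tendsto eq] by simp
    qed
  qed
  obtain X where X: "\<forall>x\<ge>X. \<forall>\<alpha> \<beta>. 0 < \<alpha> \<longrightarrow> \<alpha> \<le> 1 \<longrightarrow> \<beta> \<le> x / 2 \<longrightarrow>
      G ((x - \<beta>) / \<alpha>) / G x \<le> 4 * (1/2) powr c * exp (b * \<beta>)"
    using G_dilate_ratio_bound by blast
  show "\<forall>\<^sub>F x in at_top. AE \<omega> in M. norm (bulk_ratio x \<omega>) \<le> 4 * (1/2) powr c * exp (b * B \<omega>)"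
    using eventually_ge_at_top[of X]
  proof eventually_elim
    case (elim x)
    show ?case
      using A_range by eventually_elim (use X elim in \<open>auto simp: bulk_ratio_def G_pos G_nonneg\<close>)
  qed
qed simp

lemma integrable_min_tail: "0 < \<epsilon> \<Longrightarrow> integrable M (\<lambda>\<omega>. min 1 (G ((x - B \<omega>) / A \<omega>) / \<epsilon>))"
  using G_nonneg by (intro integrable_const_bound[where B = 1] AE_I2) (auto simp: abs_le_iff)

lemma min_tail_le_split:
  fixes \<epsilon> s x :: real
  assumes \<epsilon>: "0 < \<epsilon>" and s: "0 \<le> s" and \<omega>: "\<omega> \<in> space M" and A: "0 < A \<omega>" "A \<omega> \<le> 1"
  shows "min 1 (G ((x - B \<omega>) / A \<omega>) / \<epsilon>)
    \<le> G x / \<epsilon> * bulk_ratio x \<omega> + convolution_part s x \<omega> / \<epsilon> + indicator {\<omega> \<in> space M. B \<omega> > x - s} \<omega>"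
proof -
  have nonneg: "0 \<le> G x / \<epsilon> * bulk_ratio x \<omega>" "0 \<le> convolution_part s x \<omega> / \<epsilon>"
    "0 \<le> (indicator {\<omega> \<in> space M. B \<omega> > x - s} \<omega> :: real)"
    using \<epsilon> by (auto simp: bulk_ratio_nonneg G_nonneg convolution_part_def)
  consider "B \<omega> \<le> x / 2" | "x / 2 < B \<omega> \<and> B \<omega> \<le> x - s" | "x - s < B \<omega>"
    by linarith
  then show ?thesis
  proof cases
    case 1
    then have "G x / \<epsilon> * bulk_ratio x \<omega> = G ((x - B \<omega>) / A \<omega>) / \<epsilon>"
      using G_pos[of x] by (simp add: bulk_ratio_def)
    then show ?thesis
      using nonneg by linarith
  next
    case 2
    then have "x - B \<omega> \<le> (x - B \<omega>) / A \<omega>"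
      using A s by (simp add: le_divide_eq mult_left_le)
    then have "G ((x - B \<omega>) / A \<omega>) / \<epsilon> \<le> convolution_part s x \<omega> / \<epsilon>"
      using 2 \<epsilon> by (simp add: convolution_part_def G_antimono divide_right_mono)
    then show ?thesis
      using nonneg by linarith
  next
    case 3
    then show ?thesis
      using \<omega> nonneg by (simp add: indicator_def)
  qed
qed

lemma integral_min_tail_le:
  fixes \<epsilon> s x :: real
  assumes \<epsilon>: "0 < \<epsilon>" and s: "0 \<le> s"
  shows "(\<integral>\<omega>. min 1 (G ((x - B \<omega>) / A \<omega>) / \<epsilon>) \<partial>M)
    \<le> G x / \<epsilon> * integral\<^sup>L M (bulk_ratio x) + integral\<^sup>L M (convolution_part s x) / \<epsilon> + G (x - s)"
proof -
  have "AE \<omega> in M. min 1 (G ((x - B \<omega>) / A \<omega>) / \<epsilon>)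
      \<le> G x / \<epsilon> * bulk_ratio x \<omega> + convolution_part s x \<omega> / \<epsilon> + indicator {\<omega> \<in> space M. B \<omega> > x - s} \<omega>"
    using A_range AE_space
  proof eventually_elim
    case (elim \<omega>)
    then show ?case
      using \<epsilon> s by (intro min_tail_le_split) auto
  qed
  moreover have "integrable M (\<lambda>\<omega>. min 1 (G ((x - B \<omega>) / A \<omega>) / \<epsilon>))"
    using \<epsilon> by (rule integrable_min_tail)
  ultimately have "(\<integral>\<omega>. min 1 (G ((x - B \<omega>) / A \<omega>) / \<epsilon>) \<partial>M)
      \<le> (\<integral>\<omega>. G x / \<epsilon> * bulk_ratio x \<omega> + convolution_part s x \<omega> / \<epsilon> + indicator {\<omega> \<in> space M. B \<omega> > x - s} \<omega> \<partial>M)"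
    by (intro integral_mono_AE Bochner_Integration.integrable_add integrable_mult_right integrable_divide
        integrable_bulk_ratio integrable_convolution_part integrable_indicator_B_greater)
  also have "\<dots> = G x / \<epsilon> * integral\<^sup>L M (bulk_ratio x) + integral\<^sup>L M (convolution_part s x) / \<epsilon> + G (x - s)"
    by (simp add: integrable_bulk_ratio integrable_convolution_part integrable_indicator_B_greater G_def)
  finally show ?thesis .
qed

lemma integral_min_tail_le_tail:
  fixes \<epsilon> \<gamma> s x :: real
  assumes \<epsilon>: "0 < \<epsilon>" and s: "0 \<le> s" and \<gamma>: "\<theta> + 3 * \<gamma> \<le> 1"
    and bulk: "integral\<^sup>L M (bulk_ratio x) \<le> \<theta> + \<gamma>"
    and convolution: "integral\<^sup>L M (convolution_part s x) \<le> \<gamma> * G x"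
    and shift: "G (x - s) \<le> \<gamma> / \<epsilon> * G x"
  shows "(\<integral>\<omega>. min 1 (G ((x - B \<omega>) / A \<omega>) / \<epsilon>) \<partial>M) \<le> G x / \<epsilon>"
proof -
  have "(\<integral>\<omega>. min 1 (G ((x - B \<omega>) / A \<omega>) / \<epsilon>) \<partial>M)
      \<le> G x / \<epsilon> * integral\<^sup>L M (bulk_ratio x) + integral\<^sup>L M (convolution_part s x) / \<epsilon> + G (x - s)"
    using \<epsilon> s by (rule integral_min_tail_le)
  also have "\<dots> \<le> G x / \<epsilon> * (\<theta> + \<gamma>) + \<gamma> * G x / \<epsilon> + \<gamma> / \<epsilon> * G x"
    using bulk convolution shift \<epsilon> G_pos[of x] by (intro add_mono mult_left_mono divide_right_mono) auto
  also have "\<dots> = G x / \<epsilon> * (\<theta> + 3 * \<gamma>)"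
    using \<epsilon> by (simp add: field_simps)
  also have "\<dots> \<le> G x / \<epsilon>"
    using \<epsilon> G_pos[of x] \<gamma> by (intro mult_left_le) auto
  finally show ?thesis .
qed

text \<open>
  Choose \<open>\<gamma> = (1 - \<theta>) / 4\<close>, then \<open>s\<close> and a threshold \<open>X\<close> beyond which the three terms are
  controlled, and finally \<open>\<epsilon> \<le> G X\<close> so small that \<open>(exp (b s) + 1) \<epsilon> \<le> \<gamma>\<close>; below \<open>X\<close> the
  right-hand side is \<open>1\<close>.\<close>

lemma exists_min_tail_level:
  "\<exists>\<epsilon>>0. \<epsilon> \<le> G 0 \<and> (\<forall>x. (\<integral>\<omega>. min 1 (G ((x - B \<omega>) / A \<omega>) / \<epsilon>) \<partial>M) \<le> min 1 (G x / \<epsilon>))"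
proof -
  define \<gamma> :: real where "\<gamma> = (1 - \<theta>) / 4"
  have \<gamma>: "0 < \<gamma>" "\<theta> + 3 * \<gamma> \<le> 1"
    using \<theta>_less_1 by (auto simp: \<gamma>_def field_simps)
  obtain s :: nat and X2 where X2: "\<And>x. X2 \<le> x \<Longrightarrow> integral\<^sup>L M (convolution_part s x) \<le> \<gamma> * G x"
    using convolution_part_small[OF \<gamma>(1)] by blast
  obtain X1 where X1: "\<And>x. X1 \<le> x \<Longrightarrow> integral\<^sup>L M (bulk_ratio x) < \<theta> + \<gamma>"
    using order_tendstoD(2)[OF bulk_ratio_tendsto, of "\<theta> + \<gamma>"] \<gamma>
    by (auto simp: eventually_at_top_linorder)
  define E where "E = exp (b * s) + 1"
  obtain X3 where X3: "\<And>x. X3 \<le> x \<Longrightarrow> G (x - real s) / G x < E"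
    using order_tendstoD(2)[OF G_shift_ratio_tendsto[of "real s"], of E]
    by (auto simp: E_def eventually_at_top_linorder)
  define X where "X = max (max X1 X2) (max X3 0)"
  define \<epsilon> where "\<epsilon> = min (G X) (\<gamma> / E)"
  have E: "0 < E"
    by (simp add: E_def add_pos_pos)
  have "G X \<le> G 0"
    by (rule G_antimono) (simp add: X_def)
  then have \<epsilon>: "0 < \<epsilon>" "\<epsilon> \<le> G 0"
    using G_pos[of X] \<gamma> E by (auto simp: \<epsilon>_def)
  have "\<epsilon> \<le> \<gamma> / E"
    by (simp add: \<epsilon>_def)
  then have E_le: "E \<le> \<gamma> / \<epsilon>"
    using E \<epsilon> by (simp add: field_simps)
  have "(\<integral>\<omega>. min 1 (G ((x - B \<omega>) / A \<omega>) / \<epsilon>) \<partial>M) \<le> min 1 (G x / \<epsilon>)" for x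
  proof (cases "\<epsilon> \<le> G x")
    case True
    have "(\<integral>\<omega>. min 1 (G ((x - B \<omega>) / A \<omega>) / \<epsilon>) \<partial>M) \<le> (\<integral>\<omega>. 1 \<partial>M)"
      using \<epsilon> by (intro integral_mono integrable_min_tail) auto
    then show ?thesis
      using True \<epsilon> by (simp add: prob_space)
  next
    case False
    then have "X < x"
      using G_antimono[of x X] by (force simp: \<epsilon>_def)
    have "G (x - s) \<le> E * G x"
      using X3[of x] \<open>X < x\<close> G_pos[of x] by (simp add: X_def field_simps)
    also have "\<dots> \<le> \<gamma> / \<epsilon> * G x"
      using E_le G_pos[of x] by (intro mult_right_mono) auto
    finally have "(\<integral>\<omega>. min 1 (G ((x - B \<omega>) / A \<omega>) / \<epsilon>) \<partial>M) \<le> G x / \<epsilon>"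
      using X1 X2 \<open>X < x\<close> \<epsilon> \<gamma> by (intro integral_min_tail_le_tail) (auto simp: X_def less_imp_le)
    then show ?thesis
      using False \<epsilon> by (simp add: min_absorb2)
  qed
  then show ?thesis
    using \<epsilon> by blast
qed

end

theorem lemma6p2:
  fixes M :: "'a measure" and A B :: "'a \<Rightarrow> real"
    and a b c :: real and f :: "real \<Rightarrow> real"
  assumes "prob_space M"
    and "A \<in> borel_measurable M" and "B \<in> borel_measurable M"
    and "AE \<omega> in M. 0 < A \<omega> \<and> A \<omega> \<le> 1"
    and "a > 0" and "b > 0" and "c < -1"
    and "(\<lambda>x. measure M {\<omega> \<in> space M. B \<omega> > x}) \<sim>[at_top] (\<lambda>x. a * x powr c * exp (- b * x))"
    and "(\<integral>\<^sup>+ \<omega>. ennreal (exp (b * B \<omega>) * indicator {\<omega>. A \<omega> = 1} \<omega>) \<partial>M) < 1"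
    and "f \<in> borel_measurable borel" and "\<And>y. f y \<ge> 0"
    and "\<And>y. (\<lambda>x. measure M {\<omega> \<in> space M. A \<omega> * y + B \<omega> > x})
               \<sim>[at_top] (\<lambda>x. f y * measure M {\<omega> \<in> space M. B \<omega> > x})"
  shows "\<exists>(N :: ('a \<times> real) measure) \<pi> (Z :: 'a \<times> real \<Rightarrow> real) (cZ :: real).
           prob_space N \<and> \<pi> \<in> measurable N M \<and> distr N M \<pi> = M \<and>
           Z \<in> borel_measurable N \<and> (AE \<omega> in N. Z \<omega> \<ge> 0) \<and>
           prob_space.indep_set N
             {Z -` S \<inter> space N | S. S \<in> sets (borel :: real measure)}
             {(\<lambda>\<omega>. (A (\<pi> \<omega>), B (\<pi> \<omega>))) -` T \<inter> space N | T. T \<in> sets (borel \<Otimes>\<^sub>M borel :: (real \<times> real) measure)} \<and>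
           cZ > 0 \<and>
           (\<lambda>x::real. measure N {\<omega> \<in> space N. Z \<omega> > x})
              \<sim>[at_top] (\<lambda>x. cZ * measure M {\<omega> \<in> space M. B \<omega> > x}) \<and>
           (\<forall>x. measure N {\<omega> \<in> space N. A (\<pi> \<omega>) * Z \<omega> + B (\<pi> \<omega>) > x}
                \<le> measure N {\<omega> \<in> space N. Z \<omega> > x})"
proof -
  interpret perpetuity M B a b c A
    by (intro perpetuity.intro exponential_tail.intro exponential_tail_axioms.intro perpetuity_axioms.intro)
      (rule assms)+
  obtain \<epsilon> where \<epsilon>: "0 < \<epsilon>" "\<epsilon> \<le> G 0"
    and level: "\<And>x. (\<integral>\<omega>. min 1 (G ((x - B \<omega>) / A \<omega>) / \<epsilon>) \<partial>M) \<le> min 1 (G x / \<epsilon>)"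
    using exists_min_tail_level by blast
  obtain Q where Q: "real_distribution Q" and tail_Q: "\<And>x. measure Q {x<..} = min 1 (G x / \<epsilon>)"
    and Q_nonneg: "AE z in Q. 0 \<le> z"
    using min_tail_distribution[OF \<epsilon>] by blast
  have "(\<lambda>\<omega>. (A \<omega>, B \<omega>)) \<in> measurable M (borel \<Otimes>\<^sub>M borel)"
    by measurable
  note Z = product_extension[OF prob_space_axioms Q this]
  have A_pos: "AE \<omega> in M. 0 < A \<omega>"
    using A_range by eventually_elim simp
  have "measure (M \<Otimes>\<^sub>M Q) {\<omega> \<in> space (M \<Otimes>\<^sub>M Q). A (fst \<omega>) * snd \<omega> + B (fst \<omega>) > x}
      \<le> measure (M \<Otimes>\<^sub>M Q) {\<omega> \<in> space (M \<Otimes>\<^sub>M Q). snd \<omega> > x}" for x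
    using prob_affine_snd_greater[OF prob_space_axioms Q A_measurable B_measurable A_pos] level[of x]
    by (simp add: Z(5) tail_Q)
  moreover have "(\<lambda>x. measure (M \<Otimes>\<^sub>M Q) {\<omega> \<in> space (M \<Otimes>\<^sub>M Q). snd \<omega> > x}) \<sim>[at_top]
      (\<lambda>x. 1 / \<epsilon> * measure M {\<omega> \<in> space M. B \<omega> > x})"
    using min_tail_asymp_equiv[OF \<epsilon>(1)] by (simp add: Z(5) tail_Q G_def)
  ultimately show ?thesis
    using Z Q_nonneg \<epsilon>(1)
    by (intro exI[of _ "M \<Otimes>\<^sub>M Q"] exI[of _ fst] exI[of _ snd] exI[of _ "1 / \<epsilon>"]) auto
qed

end
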